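(* Assume the setting below and suppose $\tau\le-0.5$. Then (with probability one) there exists $K$ such that $t_k=1$ for all $k\ge K$, and $f(x_k)\to-\infty$.
   Context: Let $n\ge2$, $a\ge\sqrt{n-1}$, $f(x)=a|x^{(1)}|+\sum_{i=2}^n x^{(i)}$ on $\mathbb{R}^n$ ($x^{(i)}$ the $i$-th coordinate), $0<c_1<c_2<1$, and $\tau=c_1+\frac{(n-1)(c_1-1)}{a^2}$. The initial point $x_0$ is drawn from the normal distribution on $\mathbb{R}^n$ (independently of $a$), and $x_{k+1}=x_k+t_kd_k$, $d_k=-\nabla f(x_k)$, where $t_k$ is returned by the following Armijo–Wolfe bracketing line search: set $\alpha=0$, $\beta=+\infty$, $t=1$; repeat: if $A(t)$ fails set $\beta\leftarrow t$; else if $W(t)$ fails set $\alpha\leftarrow t$; else stop and return $t$; then if $\beta<+\infty$ set $t\leftarrow(\alpha+\beta)/2$, otherwise $t\leftarrow2\alpha$. Here $A(t)$: $f(x_k+td_k)\le f(x_k)+c_1t\nabla f(x_k)^Td_k$, and $W(t)$: $f$ is differentiable at $x_k+td_k$ and $\nabla f(x_k+td_k)^Td_k\ge c_2\nabla f(x_k)^Td_k$. All statements are understood to hold with probability one. *)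

theory Defs
  imports "HOL-Probability.Probability"
begin

(* gradient of f at x (meaningful where f is differentiable) *)
definition grad :: "('a::euclidean_space \<Rightarrow> real) \<Rightarrow> 'a \<Rightarrow> 'a" where
  "grad f x = (THE g. (f has_derivative (\<lambda>h. g \<bullet> h)) (at x))"

definition armijo :: "real \<Rightarrow> ('a::euclidean_space \<Rightarrow> real) \<Rightarrow> 'a \<Rightarrow> 'a \<Rightarrow> real \<Rightarrow> bool" where
  "armijo c1 f x d t \<longleftrightarrow> f (x + t *\<^sub>R d) \<le> f x + c1 * t * (grad f x \<bullet> d)"

definition wolfe :: "real \<Rightarrow> ('a::euclidean_space \<Rightarrow> real) \<Rightarrow> 'a \<Rightarrow> 'a \<Rightarrow> real \<Rightarrow> bool" where
  "wolfe c2 f x d t \<longleftrightarrow> f differentiable (at (x + t *\<^sub>R d)) \<and>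
      grad f (x + t *\<^sub>R d) \<bullet> d \<ge> c2 * (grad f x \<bullet> d)"

(* one step of the bracketing line search; state (alpha, beta, t), beta = None means +infinity.
   If both conditions hold the search has stopped and the state is left unchanged. *)
definition ls_upd :: "real \<Rightarrow> real \<Rightarrow> ('a::euclidean_space \<Rightarrow> real) \<Rightarrow> 'a \<Rightarrow> 'a
     \<Rightarrow> real \<times> real option \<times> real \<Rightarrow> real \<times> real option \<times> real" where
  "ls_upd c1 c2 f x d s = (case s of (\<alpha>, \<beta>, t) \<Rightarrow>
     if \<not> armijo c1 f x d t then
       (\<alpha>, Some t, (\<alpha> + t) / 2)
     else if \<not> wolfe c2 f x d t then
       (t, \<beta>, (case \<beta> of None \<Rightarrow> 2 * t | Some b \<Rightarrow> (t + b) / 2))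
     else (\<alpha>, \<beta>, t))"

primrec ls_state :: "real \<Rightarrow> real \<Rightarrow> ('a::euclidean_space \<Rightarrow> real) \<Rightarrow> 'a \<Rightarrow> 'a
     \<Rightarrow> nat \<Rightarrow> real \<times> real option \<times> real" where
  "ls_state c1 c2 f x d 0 = (0, None, 1)"
| "ls_state c1 c2 f x d (Suc j) = ls_upd c1 c2 f x d (ls_state c1 c2 f x d j)"

definition ls_returns :: "real \<Rightarrow> real \<Rightarrow> ('a::euclidean_space \<Rightarrow> real) \<Rightarrow> 'a \<Rightarrow> 'a \<Rightarrow> real \<Rightarrow> bool" where
  "ls_returns c1 c2 f x d t \<longleftrightarrow> (\<exists>j.
     t = snd (snd (ls_state c1 c2 f x d j)) \<and> armijo c1 f x d t \<and> wolfe c2 f x d t \<and>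
     (\<forall>i<j. \<not> (armijo c1 f x d (snd (snd (ls_state c1 c2 f x d i))) \<and>
                 wolfe c2 f x d (snd (snd (ls_state c1 c2 f x d i))))))"

definition gd_run :: "real \<Rightarrow> real \<Rightarrow> ('a::euclidean_space \<Rightarrow> real) \<Rightarrow> 'a
     \<Rightarrow> (nat \<Rightarrow> 'a) \<Rightarrow> (nat \<Rightarrow> real) \<Rightarrow> bool" where
  "gd_run c1 c2 f x0 x t \<longleftrightarrow> x 0 = x0 \<and> (\<forall>k.
     f differentiable (at (x k)) \<and>
     ls_returns c1 c2 f (x k) (- grad f (x k)) (t k) \<and>
     x (Suc k) = x k + t k *\<^sub>R (- grad f (x k)))"

(* the objective f(x) = a |x^(1)| + sum_{i>=2} x^(i); i1 is the distinguished first coordinate *)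
definition fobj :: "real \<Rightarrow> 'n::finite \<Rightarrow> real ^ 'n \<Rightarrow> real" where
  "fobj a i1 x = a * \<bar>x $ i1\<bar> + (\<Sum>i\<in>UNIV - {i1}. x $ i)"

definition gauss :: "(real ^ 'n::finite) measure" where
  "gauss = density lborel (\<lambda>x. ennreal (\<Prod>i\<in>UNIV. std_normal_density (x $ i)))"

end

theory Submission
  imports Defs
begin

text \<open>
  Let \<open>u\<close> be the first coordinate of \<open>x\<close> and \<open>r = \<bar>u\<bar>/a\<close>. Away from \<open>u = 0\<close>, a step of length
  \<open>t\<close> along \<open>-\<nabla>f\<close> maps \<open>r\<close> to \<open>\<bar>r - t\<bar>\<close> and lowers every other coordinate by \<open>t\<close>. For \<open>t < r\<close>
  the Armijo condition holds and the Wolfe condition fails; for \<open>t > r\<close> the Wolfe condition holds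
  and the Armijo condition reads \<open>t (1 + \<tau>) \<le> 2 r\<close>. Hence, as long as no trial step equals \<open>r\<close>,
  the line search returns the first power \<open>2\<^sup>m > r\<close> if \<open>r \<ge> 1\<close>, and the first \<open>2\<^sup>-\<^sup>j\<close> with
  \<open>2\<^sup>-\<^sup>j (1 + \<tau>) \<le> 2 r\<close> if \<open>r < 1\<close>. Under \<open>\<tau> \<le> -1/2\<close> the dynamics \<open>r \<mapsto> t(r) - r\<close> drives
  \<open>r\<close> into the region where both \<open>r\<close> and \<open>1 - r\<close> accept the unit step, and keeps it there: from
  then on \<open>t\<^sub>k = 1\<close>, \<open>u\<close> stays bounded and the other coordinates decrease linearly. All step
  sizes are dyadic rationals, so if \<open>r\<^sub>0\<close> is irrational (which holds almost surely) every \<open>r\<^sub>k\<close> is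
  irrational; this keeps the iterates off the kink and the trial steps different from \<open>r\<close>.
\<close>

definition fobj_gradient :: "real \<Rightarrow> 'n::finite \<Rightarrow> real^'n \<Rightarrow> real^'n" where
  "fobj_gradient a i1 x = (\<chi> i. if i = i1 then a * sgn (x $ i1) else 1)"

lemma real_card_Diff_singleton_UNIV: "real (card (UNIV - {i::'n::finite})) = real CARD('n) - 1"
  by (simp add: card_Diff_singleton of_nat_diff)

lemma inner_fobj_gradient:
  "fobj_gradient a i1 x \<bullet> y = a * sgn (x $ i1) * y $ i1 + (\<Sum>i\<in>UNIV - {i1}. y $ i)"
  unfolding fobj_gradient_def inner_vec_def
  by (subst sum.remove[of _ i1]) (auto intro!: sum.cong)

lemma inner_fobj_gradients:
  "fobj_gradient a i1 (y::real^'n::finite) \<bullet> (- fobj_gradient a i1 x)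
     = - (a * a * sgn (y $ i1) * sgn (x $ i1) + (real CARD('n) - 1))"
  by (simp add: inner_fobj_gradient sum_negf real_card_Diff_singleton_UNIV) (simp add: fobj_gradient_def)

lemma has_derivative_fobj:
  fixes x :: "real^'n::finite"
  assumes "x $ i1 \<noteq> 0"
  shows "(fobj a i1 has_derivative (\<lambda>h. fobj_gradient a i1 x \<bullet> h)) (at x)"
proof (rule has_derivative_transform_within_open)
  \<comment> \<open>\<open>fobj\<close> is linear on the open half-space where the first coordinate keeps its sign\<close>
  let ?H = "{y::real^'n. 0 < y $ i1 * x $ i1}"
  show "((\<lambda>y. fobj_gradient a i1 x \<bullet> y) has_derivative (\<lambda>h. fobj_gradient a i1 x \<bullet> h)) (at x)"
    by (rule bounded_linear_imp_has_derivative) (rule bounded_linear_inner_right)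
  show "open ?H"
    by (intro open_Collect_less continuous_intros)
  show "x \<in> ?H"
    using assms by (auto simp: zero_less_mult_iff linorder_neq_iff)
  fix y assume "y \<in> ?H"
  then have "\<bar>y $ i1\<bar> = sgn (x $ i1) * y $ i1"
    by (cases "x $ i1 > 0") (auto simp: zero_less_mult_iff)
  then show "fobj_gradient a i1 x \<bullet> y = fobj a i1 y"
    by (simp add: inner_fobj_gradient fobj_def)
qed

lemma grad_fobj:
  fixes x :: "real^'n::finite"
  assumes "x $ i1 \<noteq> 0"
  shows "grad (fobj a i1) x = fobj_gradient a i1 x"
  unfolding grad_def
proof (rule the_equality)
  show "(fobj a i1 has_derivative (\<bullet>) (fobj_gradient a i1 x)) (at x)"
    using has_derivative_fobj[OF assms] by (simp add: fun_eq_iff)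
  fix g assume "(fobj a i1 has_derivative (\<lambda>h. g \<bullet> h)) (at x)"
  with has_derivative_fobj[OF assms]
  have "(\<lambda>h. g \<bullet> h) = (\<lambda>h. fobj_gradient a i1 x \<bullet> h)"
    using has_derivative_unique by blast
  then have "(g - fobj_gradient a i1 x) \<bullet> (g - fobj_gradient a i1 x) = 0"
    by (metis (no_types) inner_diff_left diff_self)
  then show "g = fobj_gradient a i1 x"
    by simp
qed

lemma differentiable_fobj: "x $ i1 \<noteq> 0 \<Longrightarrow> fobj a i1 differentiable (at x)"
  using has_derivative_fobj differentiableI by blast

lemma fobj_descent_coordinate:
  "(x + t *\<^sub>R (- fobj_gradient a i1 x)) $ i1 = x $ i1 - t * a * sgn (x $ i1)"
  by (simp add: fobj_gradient_def)

lemma fobj_descent_other_coordinates: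
  "(\<Sum>i\<in>UNIV - {i1}. (x + t *\<^sub>R (- fobj_gradient a i1 (x::real^'n::finite))) $ i)
     = (\<Sum>i\<in>UNIV - {i1}. x $ i) - t * (real CARD('n) - 1)"
proof -
  have "(\<Sum>i\<in>UNIV - {i1}. (x + t *\<^sub>R (- fobj_gradient a i1 x)) $ i) = (\<Sum>i\<in>UNIV - {i1}. x $ i - t)"
    by (rule sum.cong) (auto simp: fobj_gradient_def)
  then show ?thesis
    by (simp add: sum_subtractf real_card_Diff_singleton_UNIV)
qed

lemma abs_diff_sgn_scaled:
  assumes "a > 0" "u \<noteq> (0::real)"
  shows "u - t * a * sgn u = sgn u * (a * (\<bar>u\<bar>/a - t))"
    and "\<bar>u - t * a * sgn u\<bar> = a * \<bar>\<bar>u\<bar>/a - t\<bar>"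
proof -
  show eq: "u - t * a * sgn u = sgn u * (a * (\<bar>u\<bar>/a - t))"
    using assms by (simp add: field_simps) (metis mult.commute sgn_mult_abs)
  show "\<bar>u - t * a * sgn u\<bar> = a * \<bar>\<bar>u\<bar>/a - t\<bar>"
    unfolding eq using assms by (simp add: abs_mult abs_sgn_eq)
qed

lemma armijo_fobj_iff:
  fixes x :: "real^'n::finite"
  assumes "a > 0" "x $ i1 \<noteq> 0"
  shows "armijo c1 (fobj a i1) x (- fobj_gradient a i1 x) t \<longleftrightarrow>
     a * a * \<bar>\<bar>x $ i1\<bar>/a - t\<bar> - t * (real CARD('n) - 1)
       \<le> a * \<bar>x $ i1\<bar> - c1 * t * (a * a + (real CARD('n) - 1))"
proof -
  have "sgn (x $ i1) * sgn (x $ i1) = 1"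
    using assms by (simp add: sgn_if)
  then show ?thesis
    unfolding armijo_def grad_fobj[OF assms(2)] fobj_def fobj_descent_coordinate
      fobj_descent_other_coordinates inner_fobj_gradients abs_diff_sgn_scaled(2)[OF assms]
    by (simp add: algebra_simps)
qed

lemma wolfe_fobj_iff:
  fixes x :: "real^'n::finite"
  assumes "a > 0" "x $ i1 \<noteq> 0" "t \<noteq> \<bar>x $ i1\<bar>/a"
  shows "wolfe c2 (fobj a i1) x (- fobj_gradient a i1 x) t \<longleftrightarrow>
     - (a * a * sgn (\<bar>x $ i1\<bar>/a - t) + (real CARD('n) - 1))
        \<ge> c2 * (- (a * a + (real CARD('n) - 1)))"
proof -
  let ?y = "x + t *\<^sub>R (- fobj_gradient a i1 x)"
  have sgn_sq: "sgn (x $ i1) * sgn (x $ i1) = 1"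
    using assms by (simp add: sgn_if)
  have y: "?y $ i1 = sgn (x $ i1) * (a * (\<bar>x $ i1\<bar>/a - t))"
    unfolding fobj_descent_coordinate abs_diff_sgn_scaled(1)[OF assms(1,2)] ..
  then have y_nonzero: "?y $ i1 \<noteq> 0"
    using assms by (simp add: sgn_if)
  have "sgn (?y $ i1) = sgn (x $ i1) * sgn (\<bar>x $ i1\<bar>/a - t)"
    unfolding y using assms(1) by (simp add: sgn_mult)
  then show ?thesis
    unfolding wolfe_def grad_fobj[OF assms(2)] grad_fobj[OF y_nonzero] inner_fobj_gradients
    using differentiable_fobj[OF y_nonzero] sgn_sq by (simp add: algebra_simps)
qed

lemma ls_state_doubling:
  assumes "\<And>i. i < m \<Longrightarrow> armijo c1 f x d (2^i) \<and> \<not> wolfe c2 f x d (2^i)"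
  shows "i \<le> m \<Longrightarrow> ls_state c1 c2 f x d i = (if i = 0 then 0 else 2^(i-1), None, 2^i)"
proof (induction i)
  case (Suc i)
  with assms[of i] show ?case
    by (simp add: ls_upd_def)
qed simp

lemma ls_returns_doubling:
  assumes "\<And>i. i < m \<Longrightarrow> armijo c1 f x d (2^i) \<and> \<not> wolfe c2 f x d (2^i)"
    and "armijo c1 f x d (2^m)" and "wolfe c2 f x d (2^m)"
  shows "ls_returns c1 c2 f x d (2^m)"
  unfolding ls_returns_def
  using assms ls_state_doubling[OF assms(1)] by (intro exI[of _ m]) auto

lemma ls_state_halving:
  assumes "\<And>i. i < m \<Longrightarrow> \<not> armijo c1 f x d ((1/2)^i)"
  shows "i \<le> m \<Longrightarrow> ls_state c1 c2 f x d i = (0, if i = 0 then None else Some ((1/2)^(i-1)), (1/2)^i)"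
proof (induction i)
  case (Suc i)
  with assms[of i] show ?case
    by (simp add: ls_upd_def)
qed simp

lemma ls_returns_halving:
  assumes "\<And>i. i < m \<Longrightarrow> \<not> armijo c1 f x d ((1/2)^i)"
    and "armijo c1 f x d ((1/2)^m)" and "wolfe c2 f x d ((1/2)^m)"
  shows "ls_returns c1 c2 f x d ((1/2)^m)"
  unfolding ls_returns_def
  using assms ls_state_halving[OF assms(1)] by (intro exI[of _ m]) auto

lemma filterlim_at_bot_if_eventually_le_minus_real:
  fixes u :: "nat \<Rightarrow> real"
  assumes "\<And>k. K \<le> k \<Longrightarrow> u k \<le> C - real k"
  shows "filterlim u at_bot sequentially"
proof -
  have "filterlim (\<lambda>k. - C + real k) at_top sequentially"
    by (rule filterlim_tendsto_add_at_top[OF tendsto_const filterlim_real_sequentially])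
  moreover have "\<forall>\<^sub>F k in sequentially. - C + real k \<le> - u k"
    unfolding eventually_sequentially using assms by (intro exI[of _ K]) force
  ultimately have "filterlim (\<lambda>k. - u k) at_top sequentially"
    by (rule filterlim_at_top_mono)
  then show ?thesis
    by (simp add: filterlim_uminus_at_bot)
qed

lemma fobj_tendsto_at_bot_under_unit_steps:
  fixes x :: "nat \<Rightarrow> real^'n::finite"
  assumes card: "CARD('n) \<ge> 2"
    and unit_step: "\<And>k. K \<le> k \<Longrightarrow> x (Suc k) = x k + 1 *\<^sub>R (- fobj_gradient a i1 (x k))"
    and bounded: "\<And>k. K \<le> k \<Longrightarrow> a * \<bar>x k $ i1\<bar> \<le> B"
  shows "filterlim (\<lambda>k. fobj a i1 (x k)) at_bot sequentially"
proof -
  define S where "S k = (\<Sum>i\<in>UNIV - {i1}. x k $ i)" for k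
  have S_bound: "S k \<le> S K + real K - real k" if "K \<le> k" for k
    using that
  proof (induction k rule: dec_induct)
    case (step k)
    then have "S (Suc k) = S k - (real CARD('n) - 1)"
      unfolding S_def using unit_step by (simp only: fobj_descent_other_coordinates) simp
    with step.IH card show ?case
      by simp
  qed simp
  show ?thesis
  proof (rule filterlim_at_bot_if_eventually_le_minus_real)
    fix k assume "K \<le> k"
    with S_bound[OF this] bounded[OF this] show "fobj a i1 (x k) \<le> B + S K + real K - real k"
      unfolding fobj_def S_def by linarith
  qed
qed

locale fobj_line_search =
  fixes a c1 c2 tau :: real and i1 :: "'n::finite"
  assumes tau_def: "tau = c1 + (real CARD('n) - 1) * (c1 - 1) / a\<^sup>2"
    and a_pos: "a > 0" and a_sq: "a * a \<ge> real CARD('n) - 1"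
    and c1_pos: "0 < c1" and c1_less_c2: "c1 < c2" and c2_less_1: "c2 < 1"
begin

lemma card_minus_one_nonneg: "real CARD('n) - 1 \<ge> 0"
  by (simp add: Suc_le_eq)

lemma
  fixes x :: "real^'n"
  assumes "x $ i1 \<noteq> 0" "t < \<bar>x $ i1\<bar>/a"
  shows armijo_short_step: "0 < t \<Longrightarrow> armijo c1 (fobj a i1) x (- fobj_gradient a i1 x) t"
    and not_wolfe_short_step: "\<not> wolfe c2 (fobj a i1) x (- fobj_gradient a i1 x) t"
proof -
  have "\<bar>x $ i1\<bar> = a * (\<bar>x $ i1\<bar>/a)"
    using a_pos by simp
  then have lhs: "a * a * \<bar>\<bar>x $ i1\<bar>/a - t\<bar> - t * (real CARD('n) - 1)
       = a * \<bar>x $ i1\<bar> - t * (a * a + (real CARD('n) - 1))"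
    using assms(2) by (simp add: algebra_simps)
  assume "0 < t"
  then have "c1 * t * (a * a + (real CARD('n) - 1)) \<le> t * (a * a + (real CARD('n) - 1))"
    using c1_less_c2 c2_less_1 a_pos card_minus_one_nonneg
    by (intro mult_right_mono) (auto intro: add_pos_nonneg)
  then show "armijo c1 (fobj a i1) x (- fobj_gradient a i1 x) t"
    unfolding armijo_fobj_iff[OF a_pos assms(1)] lhs by linarith
next
  have "c2 * (a * a + (real CARD('n) - 1)) < a * a + (real CARD('n) - 1)"
    using c2_less_1 a_pos card_minus_one_nonneg by (simp add: add_pos_nonneg)
  then show "\<not> wolfe c2 (fobj a i1) x (- fobj_gradient a i1 x) t"
    unfolding wolfe_fobj_iff[OF a_pos assms(1) order.strict_implies_not_eq[OF assms(2)]]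
    using assms(2) by (simp add: algebra_simps)
qed

lemma
  fixes x :: "real^'n"
  assumes "x $ i1 \<noteq> 0" "\<bar>x $ i1\<bar>/a < t"
  shows wolfe_long_step: "wolfe c2 (fobj a i1) x (- fobj_gradient a i1 x) t"
    and armijo_long_step_iff:
      "armijo c1 (fobj a i1) x (- fobj_gradient a i1 x) t \<longleftrightarrow> t * (1 + tau) \<le> 2 * (\<bar>x $ i1\<bar>/a)"
proof -
  have "0 \<le> c2 * (a * a + (real CARD('n) - 1))"
    using c1_less_c2 c1_pos a_pos card_minus_one_nonneg by (intro mult_nonneg_nonneg) auto
  then show "wolfe c2 (fobj a i1) x (- fobj_gradient a i1 x) t"
    unfolding wolfe_fobj_iff[OF a_pos assms(1) order.strict_implies_not_eq[OF assms(2), symmetric]]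
    using assms(2) a_sq by (simp add: algebra_simps)
  have tau: "a * a * (1 + tau) = a * a + c1 * a * a + (real CARD('n) - 1) * (c1 - 1)"
    using a_pos by (simp add: tau_def field_simps power2_eq_square)
  have x: "\<bar>x $ i1\<bar> = a * (\<bar>x $ i1\<bar>/a)"
    using a_pos by simp
  have "(a * a * (t - \<bar>x $ i1\<bar>/a) - t * (real CARD('n) - 1)
       \<le> a * \<bar>x $ i1\<bar> - c1 * t * (a * a + (real CARD('n) - 1)))
     \<longleftrightarrow> t * (a * a * (1 + tau)) \<le> a * a * (2 * (\<bar>x $ i1\<bar>/a))"
    unfolding tau by (subst (2) x) (simp add: algebra_simps)
  also have "\<dots> \<longleftrightarrow> t * (1 + tau) \<le> 2 * (\<bar>x $ i1\<bar>/a)"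
    using a_pos by (metis mult.left_commute mult_le_cancel_left_pos mult_pos_pos)
  finally show "armijo c1 (fobj a i1) x (- fobj_gradient a i1 x) t \<longleftrightarrow> t * (1 + tau) \<le> 2 * (\<bar>x $ i1\<bar>/a)"
    unfolding armijo_fobj_iff[OF a_pos assms(1)] using assms(2) by simp
qed

end

locale fobj_line_search_tau_small =
  fobj_line_search a c1 c2 tau i1 for a c1 c2 tau :: real and i1 :: "'n::finite" +
  assumes tau_le: "tau \<le> -1/2"
begin

definition halvings :: "real \<Rightarrow> nat" where
  "halvings r = (LEAST j. (1/2::real)^j * (1 + tau) \<le> 2 * r)"

definition doublings :: "real \<Rightarrow> nat" where
  "doublings r = (LEAST m. r < (2::real)^m)"

definition step_size :: "real \<Rightarrow> real" where
  "step_size r = (if r < 1 then (1/2)^halvings r else 2^doublings r)"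

text \<open>In the settled region both \<open>r\<close> and \<open>1 - r\<close> accept the unit step, which swaps them.\<close>

definition settled :: "real \<Rightarrow> bool" where
  "settled r \<longleftrightarrow> r < 1 \<and> 1 + tau \<le> 2 * r \<and> 1 + tau \<le> 2 * (1 - r)"

lemma halvings_spec: "r > 0 \<Longrightarrow> (1/2::real)^halvings r * (1 + tau) \<le> 2 * r"
  unfolding halvings_def
proof (rule LeastI_ex)
  assume r: "r > 0"
  show "\<exists>j. (1/2::real)^j * (1 + tau) \<le> 2 * r"
  proof (cases "1 + tau \<le> 0")
    case True
    with r show ?thesis
      by (intro exI[of _ 0]) auto
  next
    case False
    then obtain j where "(1/2::real)^j < 2 * r / (1 + tau)"
      using real_arch_pow_inv[of "2 * r / (1 + tau)" "1/2"] r by auto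
    with False show ?thesis
      by (intro exI[of _ j]) (simp add: field_simps)
  qed
qed

lemma halvings_min: "i < halvings r \<Longrightarrow> 2 * r < (1/2::real)^i * (1 + tau)"
  unfolding halvings_def using not_less_Least by force

lemma halvings_min_large: "i < halvings r \<Longrightarrow> 4 * r < (1/2::real)^i"
proof -
  assume "i < halvings r"
  moreover have "(1/2::real)^i * (1 + tau) \<le> (1/2)^i * (1/2)"
    using tau_le by (intro mult_left_mono) auto
  ultimately show ?thesis
    using halvings_min[of i r] by linarith
qed

lemma doublings_spec: "r < (2::real)^doublings r"
proof -
  obtain n where "r < (2::real)^n"
    using real_arch_pow[of 2 r] by auto
  then show ?thesis
    unfolding doublings_def by (rule LeastI)
qed

lemma doublings_Suc:
  assumes "1 \<le> r"
  obtains k where "doublings r = Suc k" and "(2::real)^k \<le> r"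
proof -
  have "doublings r \<noteq> 0"
    using doublings_spec[of r] assms by (cases "doublings r") auto
  then obtain k where k: "doublings r = Suc k"
    using not0_implies_Suc by blast
  then have "\<not> r < (2::real)^k"
    unfolding doublings_def using not_less_Least by (metis lessI)
  with k that show ?thesis
    by simp
qed

lemma step_size_rational: "step_size r \<in> \<rat>"
  by (simp add: step_size_def)

lemma step_size_gt: "r > 0 \<Longrightarrow> r < step_size r"
proof (cases "r < 1")
  case True
  assume r: "r > 0"
  show ?thesis
  proof (cases "halvings r")
    case 0
    with True show ?thesis
      by (simp add: step_size_def)
  next
    case (Suc k)
    with halvings_min_large[of k r] r True show ?thesis
      by (simp add: step_size_def)
  qed
qed (use doublings_spec in \<open>simp add: step_size_def\<close>)

lemma step_size_le_1: "r < 1 \<Longrightarrow> step_size r \<le> 1"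
  by (simp add: step_size_def power_le_one)

lemma ls_returns_step_size:
  fixes x :: "real^'n"
  assumes irr: "\<bar>x $ i1\<bar>/a \<notin> \<rat>"
  shows "ls_returns c1 c2 (fobj a i1) x (- grad (fobj a i1) x) (step_size (\<bar>x $ i1\<bar>/a))"
proof -
  define r where "r = \<bar>x $ i1\<bar>/a"
  have x: "x $ i1 \<noteq> 0"
    using irr by auto
  then have r: "r > 0"
    using a_pos by (simp add: r_def)
  note short_step = armijo_short_step[OF x, folded r_def] not_wolfe_short_step[OF x, folded r_def]
  note long_step = wolfe_long_step[OF x, folded r_def] armijo_long_step_iff[OF x, folded r_def]
  have "ls_returns c1 c2 (fobj a i1) x (- fobj_gradient a i1 x) (step_size r)"
  proof (cases "r < 1")
    case True
    show ?thesis
      unfolding step_size_def if_P[OF True]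
    proof (rule ls_returns_halving)
      fix i assume "i < halvings r"
      with halvings_min_large[of i r] halvings_min[of i r] r
      show "\<not> armijo c1 (fobj a i1) x (- fobj_gradient a i1 x) ((1/2)^i)"
        using long_step(2)[of "(1/2)^i"] by simp
    next
      have "r < (1/2)^halvings r"
        using step_size_gt[OF r] True by (simp add: step_size_def)
      then show "armijo c1 (fobj a i1) x (- fobj_gradient a i1 x) ((1/2)^halvings r)"
        "wolfe c2 (fobj a i1) x (- fobj_gradient a i1 x) ((1/2)^halvings r)"
        using long_step halvings_spec[OF r] by simp_all
    qed
  next
    case False
    then have "1 \<le> r"
      by simp
    then obtain k where k: "doublings r = Suc k" "(2::real)^k \<le> r"
      by (rule doublings_Suc)
    show ?thesis
      unfolding step_size_def if_not_P[OF False]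
    proof (rule ls_returns_doubling)
      fix i assume "i < doublings r"
      then have "\<not> r < (2::real)^i"
        unfolding doublings_def by (rule not_less_Least)
      moreover have "(2::real)^i \<noteq> r"
        using irr[folded r_def] by auto
      ultimately have "(2::real)^i < r"
        by simp
      with r show "armijo c1 (fobj a i1) x (- fobj_gradient a i1 x) (2^i)
          \<and> \<not> wolfe c2 (fobj a i1) x (- fobj_gradient a i1 x) (2^i)"
        using short_step by simp
    next
      have "(2::real)^doublings r * (1 + tau) \<le> 2^doublings r * (1/2)"
        using tau_le by (intro mult_left_mono) auto
      also have "\<dots> = 2^k"
        using k by simp
      finally have "(2::real)^doublings r * (1 + tau) \<le> 2 * r"
        using k(2) r by linarith
      then show "armijo c1 (fobj a i1) x (- fobj_gradient a i1 x) (2^doublings r)"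
        "wolfe c2 (fobj a i1) x (- fobj_gradient a i1 x) (2^doublings r)"
        using long_step doublings_spec[of r] by simp_all
    qed
  qed
  then show ?thesis
    unfolding r_def grad_fobj[OF x] .
qed

lemma doublings_decrease:
  assumes "1 \<le> r" "r \<notin> \<rat>" "1 \<le> step_size r - r"
  shows "doublings (step_size r - r) < doublings r"
proof -
  obtain k where k: "doublings r = Suc k" "(2::real)^k \<le> r"
    using doublings_Suc[OF assms(1)] .
  moreover have "(2::real)^k \<noteq> r"
    using assms(2) by auto
  ultimately have "step_size r - r < 2^k"
    using assms(1) by (simp add: step_size_def)
  then have "doublings (step_size r - r) \<le> k"
    unfolding doublings_def by (rule Least_le)
  with k show ?thesis
    by simp
qed

lemma step_size_eq_1: "r < 1 \<Longrightarrow> 1 + tau \<le> 2 * r \<Longrightarrow> step_size r = 1"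
  by (simp add: step_size_def halvings_def Least_eq_0)

lemma settled_step: "r > 0 \<Longrightarrow> settled r \<Longrightarrow> step_size r = 1 \<and> settled (step_size r - r)"
  using step_size_eq_1 tau_le unfolding settled_def by auto

lemma halving_progress:
  assumes "r > 0" "r < 1" "2 * r < 1 + tau"
  shows "settled (step_size r - r)
    \<or> 2 * (step_size r - r) < 1 + tau \<and> halvings (step_size r - r) < halvings r"
proof -
  obtain k where k: "halvings r = Suc k"
    using halvings_spec[OF assms(1)] assms(3) by (cases "halvings r") auto
  define t where "t = (1/2::real)^halvings r"
  have t: "step_size r = t"
    using assms(2) by (simp add: step_size_def t_def)
  have half_k: "(1/2::real)^k * (1 + tau) \<le> t"
  proof -
    have "(1/2::real)^k * (1 + tau) \<le> (1/2)^k * (1/2)"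
      using tau_le by (intro mult_left_mono) auto
    moreover have "(1/2::real)^k * (1/2) = t"
      using k t_def by simp
    ultimately show ?thesis
      by linarith
  qed
  moreover have "2 * r < (1/2::real)^k * (1 + tau)"
    using halvings_min[of k r] k by simp
  ultimately have "2 * r < t"
    by simp
  show ?thesis
  proof (cases "1 + tau \<le> 2 * (t - r)")
    case True
    have "t \<le> 1/2"
      using k t_def by (simp add: power_le_one)
    with True t tau_le assms(1) show ?thesis
      unfolding settled_def by auto
  next
    case False
    have "(1/2::real)^k * (1 + tau) \<le> 2 * (t - r)"
      using half_k \<open>2 * r < t\<close> by simp
    then have "halvings (t - r) \<le> k"
      unfolding halvings_def by (rule Least_le)
    with False k t show ?thesis
      by auto
  qed
qed

lemma eventually_below_1:
  assumes step: "\<And>k. r (Suc k) = step_size (r k) - r k" and irr: "\<And>k. r k \<notin> \<rat>"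
  obtains k where "r k < 1"
proof -
  have "\<exists>k'. r k' < 1" if "doublings (r k) = n" for n k
    using that
  proof (induction n arbitrary: k rule: less_induct)
    case (less n)
    show ?case
    proof (cases "r k < 1 \<or> r (Suc k) < 1")
      case False
      then have "doublings (r (Suc k)) < n"
        using doublings_decrease[OF _ irr[of k]] step[of k] less.prems by simp
      with less.IH show ?thesis
        by blast
    qed blast
  qed
  with that show ?thesis
    by blast
qed

lemma eventually_settled_from_halving:
  assumes step: "\<And>k. r (Suc k) = step_size (r k) - r k" and pos: "\<And>k. r k > 0"
  shows "r k < 1 \<Longrightarrow> 2 * r k < 1 + tau \<Longrightarrow> \<exists>k'. settled (r k')"
proof (induction "halvings (r k)" arbitrary: k rule: less_induct)
  case less
  have "r (Suc k) < 1"
    using step_size_le_1[OF less.prems(1)] pos[of k] step[of k] by simp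
  from halving_progress[OF pos[of k] less.prems] show ?case
  proof
    assume "settled (step_size (r k) - r k)"
    then show ?thesis
      by (intro exI[of _ "Suc k"]) (simp add: step)
  next
    assume "2 * (step_size (r k) - r k) < 1 + tau \<and> halvings (step_size (r k) - r k) < halvings (r k)"
    with less.hyps[of "Suc k"] \<open>r (Suc k) < 1\<close> step[of k] show ?thesis
      by simp
  qed
qed

lemma eventually_settled:
  assumes step: "\<And>k. r (Suc k) = step_size (r k) - r k"
    and pos: "\<And>k. r k > 0" and irr: "\<And>k. r k \<notin> \<rat>"
  obtains K where "\<And>k. K \<le> k \<Longrightarrow> settled (r k)"
proof -
  obtain k1 where k1: "r k1 < 1"
    using eventually_below_1[of r, OF step irr] .
  have "\<exists>k. settled (r k)"
  proof (cases "settled (r k1)")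
    case False
    show ?thesis
    proof (cases "1 + tau \<le> 2 * r k1")
      case True
      \<comment> \<open>the unit step is accepted at \<open>r\<close> but not at \<open>1 - r\<close>, so the next ratio enters the halving regime\<close>
      then have "r (Suc k1) = 1 - r k1"
        using step[of k1] step_size_eq_1[OF k1] by simp
      with False True k1 pos[of k1] show ?thesis
        using eventually_settled_from_halving[of r, OF step pos, of "Suc k1"] unfolding settled_def by auto
    qed (use eventually_settled_from_halving[of r, OF step pos] k1 in auto)
  qed blast
  then obtain K where K: "settled (r K)"
    by blast
  have "settled (r (K + i))" for i
  proof (induction i)
    case (Suc i)
    then show ?case
      using settled_step[OF pos Suc.IH] step[of "K + i"] by (metis add_Suc_right)
  qed (use K in simp)
  then show ?thesis
    using that by (metis le_add_diff_inverse)
qed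

lemma ratio_after_step_size:
  fixes x :: "real^'n"
  assumes "x $ i1 \<noteq> 0"
  shows "\<bar>(x + step_size (\<bar>x $ i1\<bar>/a) *\<^sub>R (- fobj_gradient a i1 x)) $ i1\<bar> / a
    = step_size (\<bar>x $ i1\<bar>/a) - \<bar>x $ i1\<bar>/a"
proof -
  have "\<bar>x $ i1\<bar>/a < step_size (\<bar>x $ i1\<bar>/a)"
    using assms a_pos step_size_gt by simp
  then show ?thesis
    unfolding fobj_descent_coordinate abs_diff_sgn_scaled(2)[OF a_pos assms] using a_pos by simp
qed

lemma gd_run_from_irrational_ratio:
  fixes x0 :: "real^'n"
  assumes irr0: "\<bar>x0 $ i1\<bar> / a \<notin> \<rat>" and card: "CARD('n) \<ge> 2"
  shows "\<exists>x t. gd_run c1 c2 (fobj a i1) x0 x t \<and>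
                 (\<exists>K. \<forall>k\<ge>K. t k = 1) \<and>
                 filterlim (\<lambda>k. fobj a i1 (x k)) at_bot sequentially"
proof -
  define step where "step y = y + step_size (\<bar>y $ i1\<bar>/a) *\<^sub>R (- fobj_gradient a i1 y)" for y
  define x where "x k = (step ^^ k) x0" for k
  define r where "r k = \<bar>x k $ i1\<bar>/a" for k
  define t where "t k = step_size (r k)" for k
  have x_Suc: "x (Suc k) = x k + t k *\<^sub>R (- fobj_gradient a i1 (x k))" for k
    by (simp add: x_def step_def t_def r_def)
  have r_Suc: "r (Suc k) = step_size (r k) - r k" if "x k $ i1 \<noteq> 0" for k
    using ratio_after_step_size[OF that] by (simp add: r_def t_def x_Suc)
  have irr: "r k \<notin> \<rat>" for k
  proof (induction k)
    case (Suc k)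
    then have "x k $ i1 \<noteq> 0"
      by (auto simp: r_def)
    show ?case
    proof
      assume "r (Suc k) \<in> \<rat>"
      with Rats_diff[OF step_size_rational[of "r k"] this] r_Suc[OF \<open>x k $ i1 \<noteq> 0\<close>] Suc
      show False
        by simp
    qed
  qed (use irr0 in \<open>simp add: r_def x_def\<close>)
  have nonzero: "x k $ i1 \<noteq> 0" for k
    using irr[of k] by (auto simp: r_def)
  then have pos: "r k > 0" for k
    using a_pos by (simp add: r_def)
  obtain K where K: "\<And>k. K \<le> k \<Longrightarrow> settled (r k)"
    using eventually_settled[of r, OF r_Suc[OF nonzero] pos irr] by blast
  have unit: "t k = 1" if "K \<le> k" for k
    using settled_step[OF pos K[OF that]] by (simp add: t_def)
  have run: "gd_run c1 c2 (fobj a i1) x0 x t"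
    unfolding gd_run_def
  proof (intro conjI allI)
    fix k
    from nonzero[of k] show "fobj a i1 differentiable at (x k)"
      "ls_returns c1 c2 (fobj a i1) (x k) (- grad (fobj a i1) (x k)) (t k)"
      "x (Suc k) = x k + t k *\<^sub>R - grad (fobj a i1) (x k)"
      using differentiable_fobj ls_returns_step_size[OF irr[unfolded r_def]] grad_fobj[OF nonzero] x_Suc
      by (simp_all add: t_def r_def)
  qed (simp add: x_def)
  have "x (Suc k) = x k + 1 *\<^sub>R (- fobj_gradient a i1 (x k))" if "K \<le> k" for k
    using x_Suc[of k] unit[OF that] by simp
  moreover have "a * \<bar>x k $ i1\<bar> \<le> a * a" if "K \<le> k" for k
    using K[OF that] a_pos by (simp add: settled_def r_def)
  ultimately have "filterlim (\<lambda>k. fobj a i1 (x k)) at_bot sequentially"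
    by (rule fobj_tendsto_at_bot_under_unit_steps[OF card])
  with run unit show ?thesis
    by blast
qed

end

lemma null_sets_lborel_coordinate_hyperplane:
  "{x::real^'n::finite. x $ k = c} \<in> null_sets lborel"
proof -
  have "{x::real^'n. x \<bullet> axis k 1 = c} = {x. x $ k = c}"
    by (simp add: inner_axis)
  moreover have "negligible {x::real^'n. x \<bullet> axis k 1 = c}"
    by (rule negligible_standard_hyperplane) (auto simp: Basis_vec_def)
  ultimately have "{x::real^'n. x $ k = c} \<in> null_sets lebesgue"
    by (simp add: negligible_iff_null_sets)
  moreover have "{x::real^'n. x $ k = c} \<in> sets lborel"
    by measurable
  ultimately show ?thesis
    using null_sets_completion_iff by blast
qed

lemma AE_gauss_coordinate_ratio_irrational:
  assumes "a \<noteq> 0"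
  shows "AE x in (gauss::(real^'n::finite) measure). \<bar>x $ i\<bar> / a \<notin> \<rat>"
proof -
  have "AE x in lborel. \<forall>q\<in>\<rat>. (x::real^'n) $ i \<noteq> a * q"
    using countable_rat null_sets_lborel_coordinate_hyperplane
    by (subst AE_ball_countable) (auto intro: AE_I')
  moreover have "\<bar>x $ i\<bar> / a \<notin> \<rat>" if "\<forall>q\<in>\<rat>. x $ i \<noteq> a * q" for x :: "real^'n"
    using that[rule_format, of "\<bar>x $ i\<bar> / a"] that[rule_format, of "- \<bar>x $ i\<bar> / a"] assms
    by (cases "x $ i \<ge> 0") auto
  ultimately have "AE x in lborel. \<bar>(x::real^'n) $ i\<bar> / a \<notin> \<rat>"
    by (auto elim: eventually_mono)
  then show ?thesis
    unfolding gauss_def by (subst AE_density) (auto elim: AE_mp)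
qed

theorem corollary3:
  fixes a c1 c2 :: real and i1 :: "'n::finite"
  assumes "CARD('n) \<ge> 2"
    and "a \<ge> sqrt (real CARD('n) - 1)"
    and "0 < c1" and "c1 < c2" and "c2 < 1"
    and "c1 + (real CARD('n) - 1) * (c1 - 1) / a\<^sup>2 \<le> -0.5"
  shows "AE x0 in (gauss :: (real ^ 'n) measure).
           \<exists>x t. gd_run c1 c2 (fobj a i1) x0 x t \<and>
                 (\<exists>K. \<forall>k\<ge>K. t k = 1) \<and>
                 filterlim (\<lambda>k. fobj a i1 (x k)) at_bot sequentially"
proof -
  have sqrt_ge_1: "sqrt (real CARD('n) - 1) \<ge> 1"
    using assms(1) by simp
  with assms(2) have a_pos: "a > 0"
    by linarith
  have "real CARD('n) - 1 = sqrt (real CARD('n) - 1) * sqrt (real CARD('n) - 1)"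
    using assms(1) by simp
  also have "\<dots> \<le> a * a"
    using sqrt_ge_1 assms(2) a_pos by (intro mult_mono) auto
  finally have a_sq: "real CARD('n) - 1 \<le> a * a" .
  interpret fobj_line_search_tau_small a c1 c2 "c1 + (real CARD('n) - 1) * (c1 - 1) / a\<^sup>2" i1
    by unfold_locales (use a_pos a_sq assms in auto)
  have "AE x0 in gauss. \<bar>x0 $ i1\<bar> / a \<notin> \<rat>"
    using AE_gauss_coordinate_ratio_irrational[of a i1] a_pos by simp
  then show ?thesis
    by (rule eventually_mono) (rule gd_run_from_irrational_ratio[OF _ assms(1)])
qed

end
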